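(* Let $\gamma:\mathrm{Cl}(V,h)\to\mathrm{End}_\mathbb{C}(S)$ be a weakly-faithful complex Clifford representation. Then the complex Lipschitz group $\mathrm{L}_\gamma$ is canonically isomorphic to the automorphism group of $\gamma$ in the category $\mathrm{\mathbb{C}lRep}_w$, via $(\varphi_0,\varphi)\mapsto\varphi$. In particular, the isomorphism class of the group $\mathrm{L}_\gamma$ depends only on the isomorphism class of $\gamma$ in $\mathrm{\mathbb{C}lRep}_w$.
   Context: $(V,h)$ is a finite-dimensional real vector space with non-degenerate symmetric bilinear form, $\mathrm{Cl}(V,h)$ its real Clifford algebra; an isometry $\varphi_0$ induces the unital algebra morphism $\mathrm{Cl}(\varphi_0)$ extending it. A complex Clifford representation is a unital real-algebra morphism $\gamma:\mathrm{Cl}(V,h)\to\mathrm{End}_\mathbb{C}(S)$, $S$ a finite-dimensional complex vector space; weakly-faithful means $\gamma|_V$ injective. A morphism of complex Clifford representations $\gamma\to\gamma'$ (with $\gamma':\mathrm{Cl}(V',h')\to\mathrm{End}_\mathbb{C}(S')$) is a pair $(\varphi_0,\varphi)$, $\varphi_0:(V,h)\to(V',h')$ an isometry and $\varphi:S\to S'$ $\mathbb{C}$-linear, with $\gamma'(\mathrm{Cl}(\varphi_0)(x))\circ\varphi=\varphi\circ\gamma(x)$ for all $x$; composition is componentwise. $\mathrm{\mathbb{C}lRep}_w$ is the category of weakly-faithful complex Clifford representations with these morphisms; an automorphism of $\gamma$ is an isomorphism $\gamma\to\gamma$ (with $\varphi_0\in\mathrm{O}(V,h)$ not necessarily the identity).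 The complex Lipschitz group is $\mathrm{L}_\gamma=\{\varphi\in\mathrm{Aut}_\mathbb{C}(S)\,|\,\varphi\gamma(V)\varphi^{-1}=\gamma(V)\}$. *)

theory Defs
  imports "HOL-Analysis.Analysis"
begin

text \<open>
The quadratic space (V,h) is a finite-dimensional real vector space,
modelled by a type 'v of class euclidean_space, with a form h.  The complex spinor
space S is complex^'n for a finite index type 'n, so End_C(S) = complex^'n^'n and
C-linear maps S -> S' are matrices complex^'n^'n2.  By the universal property of the
Clifford algebra, a unital real-algebra morphism Cl(V,h) -> End_C(S) is the same as
its restriction to V: a real-linear map g with g(v)^2 = h(v,v) id.
\<close>

definition quad_space :: "('v::real_vector \<Rightarrow> 'v \<Rightarrow> real) \<Rightarrow> bool" where
  "quad_space h \<longleftrightarrow> bilinear h \<and> (\<forall>u v. h u v = h v u)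
      \<and> (\<forall>u. (\<forall>v. h u v = 0) \<longrightarrow> u = 0)"

definition clifford_rep ::
  "('v::real_vector \<Rightarrow> 'v \<Rightarrow> real) \<Rightarrow> ('v \<Rightarrow> complex^'n::finite^'n) \<Rightarrow> bool" where
  "clifford_rep h g \<longleftrightarrow> linear g \<and> (\<forall>v. g v ** g v = h v v *\<^sub>R mat 1)"

definition weakly_faithful ::
  "('v::real_vector \<Rightarrow> 'v \<Rightarrow> real) \<Rightarrow> ('v \<Rightarrow> complex^'n::finite^'n) \<Rightarrow> bool" where
  "weakly_faithful h g \<longleftrightarrow> clifford_rep h g \<and> inj g"

definition isometry ::
  "('v::real_vector \<Rightarrow> 'v \<Rightarrow> real) \<Rightarrow> ('w::real_vector \<Rightarrow> 'w \<Rightarrow> real) \<Rightarrow> ('v \<Rightarrow> 'w) \<Rightarrow> bool" where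
  "isometry h h' f \<longleftrightarrow> linear f \<and> (\<forall>u v. h' (f u) (f v) = h u v)"

text \<open>The
intertwining condition is imposed on generators v in V, which is equivalent to
imposing it on all of Cl(V,h) (the set where it holds is a unital subalgebra).\<close>

definition clrep_mor ::
  "('v::real_vector \<Rightarrow> 'v \<Rightarrow> real) \<Rightarrow> ('v \<Rightarrow> complex^'n::finite^'n)
   \<Rightarrow> ('w::real_vector \<Rightarrow> 'w \<Rightarrow> real) \<Rightarrow> ('w \<Rightarrow> complex^'m::finite^'m)
   \<Rightarrow> ('v \<Rightarrow> 'w) \<times> (complex^'n^'m) \<Rightarrow> bool" where
  "clrep_mor h g h' g' a \<longleftrightarrow> isometry h h' (fst a)
      \<and> (\<forall>v. g' (fst a v) ** snd a = snd a ** g v)"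

definition clrep_comp ::
  "('w \<Rightarrow> 'u) \<times> (complex^'m::finite^'k::finite) \<Rightarrow> ('v \<Rightarrow> 'w) \<times> (complex^'n::finite^'m)
   \<Rightarrow> ('v \<Rightarrow> 'u) \<times> (complex^'n^'k)" where
  "clrep_comp b a = (fst b \<circ> fst a, snd b ** snd a)"

definition clrep_id :: "('v \<Rightarrow> 'v) \<times> (complex^'n::finite^'n)" where
  "clrep_id = (id, mat 1)"

definition clrep_iso ::
  "('v::real_vector \<Rightarrow> 'v \<Rightarrow> real) \<Rightarrow> ('v \<Rightarrow> complex^'n::finite^'n)
   \<Rightarrow> ('w::real_vector \<Rightarrow> 'w \<Rightarrow> real) \<Rightarrow> ('w \<Rightarrow> complex^'m::finite^'m)
   \<Rightarrow> ('v \<Rightarrow> 'w) \<times> (complex^'n^'m) \<Rightarrow> bool" where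
  "clrep_iso h g h' g' a \<longleftrightarrow> clrep_mor h g h' g' a
      \<and> (\<exists>b. clrep_mor h' g' h g b \<and> clrep_comp b a = clrep_id \<and> clrep_comp a b = clrep_id)"

definition clrep_Aut ::
  "('v::real_vector \<Rightarrow> 'v \<Rightarrow> real) \<Rightarrow> ('v \<Rightarrow> complex^'n::finite^'n)
   \<Rightarrow> (('v \<Rightarrow> 'v) \<times> (complex^'n^'n)) set" where
  "clrep_Aut h g = {a. clrep_iso h g h g a}"

definition lipschitz_group :: "('v \<Rightarrow> complex^'n::finite^'n) \<Rightarrow> (complex^'n^'n) set" where
  "lipschitz_group g = {p. invertible p \<and> (\<lambda>v. p ** g v ** matrix_inv p) ` UNIV = range g}"

end

theory Submission
  imports Defs
begin

text \<open>
  Since \<open>\<gamma>\<close> is injective on \<open>V\<close>, the intertwining relation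
  \<open>\<gamma>(\<phi>\<^sub>0 v) = \<phi> \<gamma>(v) \<phi>\<^sup>-\<^sup>1\<close> shows that an automorphism is determined by its spinor
  component \<open>\<phi>\<close>, which lies in the Lipschitz group.  Conversely, conjugation by
  \<open>\<phi> \<in> L\<^sub>\<gamma>\<close> preserves \<open>\<gamma>(V)\<close> and so pulls back along \<open>\<gamma>\<close> to a linear map
  \<open>\<phi>\<^sub>0\<close> of \<open>V\<close>; it preserves the quadratic form because conjugation preserves the
  Clifford relation \<open>\<gamma>(v)\<^sup>2 = h(v,v)\<close>, hence is an isometry by polarization.
  An isomorphism \<open>(\<psi>\<^sub>0,\<psi>) : \<gamma> \<rightarrow> \<gamma>'\<close> transports automorphisms by conjugation,
  which on spinor components is \<open>\<phi> \<mapsto> \<psi> \<phi> \<psi>\<^sup>-\<^sup>1\<close>.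
\<close>

lemma matrix_add_rdistrib: "(A + B) ** C = A ** C + B ** C"
  by (vector matrix_matrix_mult_def sum.distrib[symmetric] field_simps)

lemma linear_matrix_sandwich: "linear (\<lambda>A::'a::real_algebra_1^'n^'m. P ** A ** Q)"
  by (rule linearI)
    (simp_all add: matrix_add_ldistrib matrix_add_rdistrib matrix_scalar_ac
      scalar_matrix_assoc[symmetric])

lemma mat_1_neq_0: "(mat 1 :: 'a::zero_neq_one^'n^'n) \<noteq> 0"
proof
  assume "(mat 1 :: 'a^'n^'n) = 0"
  then have "(mat 1 :: 'a^'n^'n) $ i $ i = 0" for i by simp
  then show False by (simp add: mat_def)
qed

lemma matrix_inv_unique:
  fixes p q :: "'a::semiring_1^'n^'n"
  assumes "p ** q = mat 1" "q ** p = mat 1"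
  shows "matrix_inv p = q"
proof -
  have "p ** matrix_inv p = mat 1 \<and> matrix_inv p ** p = mat 1"
    unfolding matrix_inv_def by (rule someI[of _ q]) (use assms in auto)
  then show ?thesis
    by (metis assms(2) matrix_mul_assoc matrix_mul_lid matrix_mul_rid)
qed

lemma matrix_conj_cancel:
  assumes "q ** p = mat 1"
  shows "q ** (p ** x ** q) ** p = x"
proof -
  have "q ** (p ** x ** q) ** p = (q ** p) ** x ** (q ** p)"
    by (simp add: matrix_mul_assoc)
  then show ?thesis using assms by simp
qed

lemma linear_inv_comp:
  assumes "linear g" "inj g" "linear k" "\<And>v. k v \<in> range g"
  shows "linear (inv g \<circ> k)"
proof -
  have gk: "g ((inv g \<circ> k) v) = k v" for v
    using assms(4) by (simp add: f_inv_into_f)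
  show ?thesis
  proof (rule linearI)
    fix x y
    have "g ((inv g \<circ> k) (x + y)) = g ((inv g \<circ> k) x + (inv g \<circ> k) y)"
      using assms(1,3) by (simp only: gk linear_add)
    then show "(inv g \<circ> k) (x + y) = (inv g \<circ> k) x + (inv g \<circ> k) y"
      using assms(2) by (simp add: inj_eq)
  next
    fix c x
    have "g ((inv g \<circ> k) (c *\<^sub>R x)) = g (c *\<^sub>R (inv g \<circ> k) x)"
      using assms(1,3) by (simp only: gk linear_scale)
    then show "(inv g \<circ> k) (c *\<^sub>R x) = c *\<^sub>R (inv g \<circ> k) x"
      using assms(2) by (simp add: inj_eq)
  qed
qed

lemma isometryI_quadratic_form:
  assumes "quad_space h" "quad_space h'" "linear f"
    and quadratic: "\<And>v. h' (f v) (f v) = h v v"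
  shows "isometry h h' f"
proof -
  have square_sum: "k (x + y) (x + y) = k x x + 2 * k x y + k y y"
    if "quad_space k" for k :: "'c::real_vector \<Rightarrow> 'c \<Rightarrow> real" and x y
    using that unfolding quad_space_def by (simp add: bilinear_ladd bilinear_radd)
  have "h' (f u) (f v) = h u v" for u v
  proof -
    have "h' (f u + f v) (f u + f v) = h (u + v) (u + v)"
      using quadratic[of "u + v"] assms(3) by (simp add: linear_add)
    then show ?thesis
      using square_sum[OF assms(1)] square_sum[OF assms(2)] quadratic[of u] quadratic[of v]
      by simp
  qed
  then show ?thesis using assms(3) unfolding isometry_def by blast
qed

lemma clrep_comp_assoc: "clrep_comp c (clrep_comp b a) = clrep_comp (clrep_comp c b) a"
  by (simp add: clrep_comp_def comp_assoc matrix_mul_assoc)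

lemma clrep_comp_id_left: "clrep_comp clrep_id a = a"
  by (simp add: clrep_comp_def clrep_id_def)

lemma clrep_mor_comp:
  assumes "clrep_mor h g h' g' a" "clrep_mor h' g' h'' g'' b"
  shows "clrep_mor h g h'' g'' (clrep_comp b a)"
proof -
  have "isometry h h'' (fst b \<circ> fst a)"
    using assms unfolding clrep_mor_def isometry_def by (auto intro: linear_compose)
  moreover have "g'' (fst b (fst a v)) ** (snd b ** snd a) = snd b ** snd a ** g v" for v
  proof -
    have "g'' (fst b (fst a v)) ** (snd b ** snd a) = snd b ** g' (fst a v) ** snd a"
      using assms(2) unfolding clrep_mor_def by (simp add: matrix_mul_assoc)
    also have "\<dots> = snd b ** snd a ** g v"
      using assms(1) unfolding clrep_mor_def by (simp add: matrix_mul_assoc[symmetric])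
    finally show ?thesis .
  qed
  ultimately show ?thesis unfolding clrep_mor_def clrep_comp_def by simp
qed

lemma clrep_iso_inverse:
  assumes "clrep_iso h g h' g' a"
  obtains b where "clrep_iso h' g' h g b" "clrep_comp b a = clrep_id" "clrep_comp a b = clrep_id"
  using assms unfolding clrep_iso_def by blast

lemma clrep_iso_comp:
  assumes "clrep_iso h g h' g' a" "clrep_iso h' g' h'' g'' b"
  shows "clrep_iso h g h'' g'' (clrep_comp b a)"
proof -
  obtain a' where a': "clrep_iso h' g' h g a'" "clrep_comp a' a = clrep_id" "clrep_comp a a' = clrep_id"
    using assms(1) by (rule clrep_iso_inverse)
  obtain b' where b': "clrep_iso h'' g'' h' g' b'" "clrep_comp b' b = clrep_id" "clrep_comp b b' = clrep_id"
    using assms(2) by (rule clrep_iso_inverse)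
  have "clrep_comp (clrep_comp a' b') (clrep_comp b a) = clrep_id"
    by (metis a'(2) b'(2) clrep_comp_assoc clrep_comp_id_left)
  moreover have "clrep_comp (clrep_comp b a) (clrep_comp a' b') = clrep_id"
    by (metis a'(3) b'(3) clrep_comp_assoc clrep_comp_id_left)
  moreover have "clrep_mor h'' g'' h g (clrep_comp a' b')"
    using a'(1) b'(1) unfolding clrep_iso_def by (blast intro: clrep_mor_comp)
  ultimately show ?thesis
    using assms unfolding clrep_iso_def by (blast intro: clrep_mor_comp)
qed

lemma clrep_mor_conjugate:
  assumes "clrep_mor h g h' g' a" "snd a ** q = mat 1"
  shows "g' (fst a v) = snd a ** g v ** q"
proof -
  have "g' (fst a v) = g' (fst a v) ** snd a ** q"
    using assms(2) by (simp add: matrix_mul_assoc[symmetric])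
  also have "\<dots> = snd a ** g v ** q"
    using assms(1) unfolding clrep_mor_def by simp
  finally show ?thesis .
qed

lemma clrep_mor_eqI:
  assumes "inj g'" "clrep_mor h g h' g' a" "clrep_mor h g h' g' c" "snd a = snd c"
    and "snd a ** q = mat 1"
  shows "a = c"
proof -
  have "g' (fst a v) = g' (fst c v)" for v
    using clrep_mor_conjugate[OF assms(2,5)] clrep_mor_conjugate[OF assms(3)] assms(4,5)
    by simp
  then have "fst a = fst c" using assms(1) by (auto simp: inj_eq)
  then show ?thesis using assms(4) by (simp add: prod_eq_iff)
qed

lemma clrep_isoI:
  assumes "inj g" "inj g'" "clrep_mor h g h' g' a" "clrep_mor h' g' h g b"
    and ab: "snd a ** snd b = mat 1" and ba: "snd b ** snd a = mat 1"
  shows "clrep_iso h g h' g' a"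
proof -
  have "g (fst b (fst a v)) = g v" for v
    using clrep_mor_conjugate[OF assms(3) ab] clrep_mor_conjugate[OF assms(4) ba]
    by (simp add: matrix_conj_cancel[OF ba])
  then have "fst b \<circ> fst a = id" using assms(1) by (auto simp: inj_eq)
  moreover have "g' (fst a (fst b w)) = g' w" for w
    using clrep_mor_conjugate[OF assms(3) ab] clrep_mor_conjugate[OF assms(4) ba]
    by (simp add: matrix_conj_cancel[OF ab])
  then have "fst a \<circ> fst b = id" using assms(2) by (auto simp: inj_eq)
  ultimately have "clrep_comp b a = clrep_id" "clrep_comp a b = clrep_id"
    using ab ba by (simp_all add: clrep_comp_def clrep_id_def)
  then show ?thesis
    using assms(3,4) unfolding clrep_iso_def by blast
qed

lemma lipschitz_groupI:
  assumes "p ** q = mat 1" "q ** p = mat 1" "range (\<lambda>v. p ** g v ** q) = range g"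
  shows "p \<in> lipschitz_group g"
  using assms matrix_inv_unique unfolding lipschitz_group_def invertible_def by blast

lemma lipschitz_groupE:
  assumes "p \<in> lipschitz_group g"
  obtains q where "p ** q = mat 1" "q ** p = mat 1" "range (\<lambda>v. p ** g v ** q) = range g"
proof -
  obtain q where "p ** q = mat 1" "q ** p = mat 1"
    using assms unfolding lipschitz_group_def invertible_def by blast
  moreover from this have "matrix_inv p = q" by (rule matrix_inv_unique)
  ultimately show thesis
    using assms that unfolding lipschitz_group_def by simp
qed

lemma clrep_mor_conjugation:
  fixes g :: "'v::real_vector \<Rightarrow> complex^'n::finite^'n"
  assumes "quad_space h" "weakly_faithful h g"
    and pq: "p ** q = mat 1" and qp: "q ** p = mat 1"
    and conj_in_range: "\<And>v. p ** g v ** q \<in> range g"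
  shows "clrep_mor h g h g (inv g \<circ> (\<lambda>v. p ** g v ** q), p)"
proof -
  define f where "f = inv g \<circ> (\<lambda>v. p ** g v ** q)"
  have lin_g: "linear g" and inj_g: "inj g"
    and clifford: "\<And>v. g v ** g v = h v v *\<^sub>R mat 1"
    using assms(2) unfolding weakly_faithful_def clifford_rep_def by auto
  have gf: "g (f v) = p ** g v ** q" for v
    unfolding f_def using conj_in_range by (simp add: f_inv_into_f)
  have "linear f"
    unfolding f_def using lin_g inj_g conj_in_range
    by (intro linear_inv_comp linear_compose[OF lin_g linear_matrix_sandwich, unfolded o_def])
  moreover have "h (f v) (f v) = h v v" for v
  proof -
    have "h (f v) (f v) *\<^sub>R (mat 1 :: complex^'n^'n) = g (f v) ** g (f v)"
      by (simp add: clifford)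
    also have "\<dots> = p ** (g v ** (q ** p) ** g v) ** q"
      by (simp add: gf matrix_mul_assoc)
    also have "\<dots> = h v v *\<^sub>R mat 1"
      using pq qp by (simp add: clifford matrix_scalar_ac scalar_matrix_assoc[symmetric])
    finally show ?thesis using mat_1_neq_0 scaleR_cancel_right by blast
  qed
  ultimately have "isometry h h f"
    using assms(1) by (intro isometryI_quadratic_form)
  moreover have "g (f v) ** p = p ** g v" for v
    using qp by (simp add: gf matrix_mul_assoc[symmetric])
  ultimately show ?thesis
    unfolding clrep_mor_def f_def by simp
qed

lemma snd_clrep_Aut_in_lipschitz_group:
  assumes "a \<in> clrep_Aut h g"
  shows "snd a \<in> lipschitz_group g"
proof -
  obtain b where mor: "clrep_mor h g h g a"
    and inverse: "clrep_comp b a = clrep_id" "clrep_comp a b = clrep_id"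
    using assms unfolding clrep_Aut_def clrep_iso_def by blast
  have ab: "snd a ** snd b = mat 1" and ba: "snd b ** snd a = mat 1"
    and surj: "fst a \<circ> fst b = id"
    using inverse by (simp_all add: clrep_comp_def clrep_id_def)
  have "range (\<lambda>v. snd a ** g v ** snd b) = g ` range (fst a)"
    using clrep_mor_conjugate[OF mor ab] by (simp add: image_comp o_def)
  also have "\<dots> = range g"
    using surjI[of "fst a" "fst b"] surj by (simp add: pointfree_idE)
  finally show ?thesis using lipschitz_groupI[OF ab ba] by blast
qed

lemma lipschitz_group_in_snd_clrep_Aut:
  fixes g :: "'v::real_vector \<Rightarrow> complex^'n::finite^'n"
  assumes "quad_space h" "weakly_faithful h g" "p \<in> lipschitz_group g"
  shows "p \<in> snd ` clrep_Aut h g"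
proof -
  obtain q where pq: "p ** q = mat 1" and qp: "q ** p = mat 1"
    and conj_range: "range (\<lambda>v. p ** g v ** q) = range g"
    using assms(3) by (rule lipschitz_groupE)
  have "q ** g v ** p \<in> range g" for v
  proof -
    obtain u where "g v = p ** g u ** q"
      using conj_range by (metis (no_types, lifting) imageE rangeI)
    then show ?thesis using matrix_conj_cancel[OF qp] by simp
  qed
  moreover have "p ** g v ** q \<in> range g" for v
    using conj_range by blast
  moreover have "inj g"
    using assms(2) unfolding weakly_faithful_def by blast
  ultimately have "clrep_iso h g h g (inv g \<circ> (\<lambda>v. p ** g v ** q), p)"
    using pq qp clrep_mor_conjugation[OF assms(1,2)]
    by (intro clrep_isoI[where b = "(inv g \<circ> (\<lambda>v. q ** g v ** p), q)"]) simp_all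
  then have "(inv g \<circ> (\<lambda>v. p ** g v ** q), p) \<in> clrep_Aut h g"
    unfolding clrep_Aut_def by simp
  then show ?thesis by force
qed

lemma bij_betw_snd_clrep_Aut:
  fixes g :: "'v::real_vector \<Rightarrow> complex^'n::finite^'n"
  assumes "quad_space h" "weakly_faithful h g"
  shows "bij_betw snd (clrep_Aut h g) (lipschitz_group g)"
proof (rule bij_betw_imageI)
  show "inj_on snd (clrep_Aut h g)"
  proof (rule inj_onI)
    fix a c assume a: "a \<in> clrep_Aut h g" and c: "c \<in> clrep_Aut h g" and "snd a = snd c"
    obtain b where "clrep_comp a b = clrep_id"
      using a unfolding clrep_Aut_def by (blast elim: clrep_iso_inverse)
    then have "snd a ** snd b = mat 1" by (simp add: clrep_comp_def clrep_id_def)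
    moreover have "inj g" using assms(2) unfolding weakly_faithful_def by blast
    ultimately show "a = c"
      using a c \<open>snd a = snd c\<close> unfolding clrep_Aut_def clrep_iso_def
      by (blast intro: clrep_mor_eqI)
  qed
  show "snd ` clrep_Aut h g = lipschitz_group g"
    using snd_clrep_Aut_in_lipschitz_group lipschitz_group_in_snd_clrep_Aut[OF assms]
    by blast
qed

lemma clrep_Aut_comp:
  assumes "a \<in> clrep_Aut h g" "b \<in> clrep_Aut h g"
  shows "clrep_comp a b \<in> clrep_Aut h g"
  using assms clrep_iso_comp unfolding clrep_Aut_def by blast

lemma lipschitz_group_conj_by_clrep_iso:
  fixes g :: "'v::real_vector \<Rightarrow> complex^'n::finite^'n"
  assumes "quad_space h" "weakly_faithful h g"
    and "clrep_iso h g h' g' a" "clrep_iso h' g' h g b" "x \<in> lipschitz_group g"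
  shows "snd a ** x ** snd b \<in> lipschitz_group g'"
proof -
  obtain c where c: "c \<in> clrep_Aut h g" "snd c = x"
    using assms(5) bij_betw_snd_clrep_Aut[OF assms(1,2)] by (metis bij_betw_imp_surj_on imageE)
  then have "clrep_comp a (clrep_comp c b) \<in> clrep_Aut h' g'"
    using assms(3,4) unfolding clrep_Aut_def by (blast intro: clrep_iso_comp)
  then show ?thesis
    using c(2) snd_clrep_Aut_in_lipschitz_group by (fastforce simp: clrep_comp_def matrix_mul_assoc)
qed

lemma lipschitz_group_isomorphic:
  fixes g :: "'v::real_vector \<Rightarrow> complex^'n::finite^'n"
    and g' :: "'w::real_vector \<Rightarrow> complex^'m::finite^'m"
  assumes "quad_space h" "weakly_faithful h g" "quad_space h'" "weakly_faithful h' g'"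
    and "clrep_iso h g h' g' a"
  shows "\<exists>F. bij_betw F (lipschitz_group g) (lipschitz_group g')
           \<and> (\<forall>x\<in>lipschitz_group g. \<forall>y\<in>lipschitz_group g. F (x ** y) = F x ** F y)"
proof -
  obtain b where b: "clrep_iso h' g' h g b"
    and "clrep_comp b a = clrep_id" "clrep_comp a b = clrep_id"
    using assms(5) by (rule clrep_iso_inverse)
  then have ba: "snd b ** snd a = mat 1" and ab: "snd a ** snd b = mat 1"
    by (simp_all add: clrep_comp_def clrep_id_def)
  have "bij_betw (\<lambda>x. snd a ** x ** snd b) (lipschitz_group g) (lipschitz_group g')"
  proof (rule bij_betwI[where g = "\<lambda>y. snd b ** y ** snd a"])
    show "(\<lambda>x. snd a ** x ** snd b) \<in> lipschitz_group g \<rightarrow> lipschitz_group g'"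
      using lipschitz_group_conj_by_clrep_iso[OF assms(1,2,5) b] by blast
    show "(\<lambda>y. snd b ** y ** snd a) \<in> lipschitz_group g' \<rightarrow> lipschitz_group g"
      using lipschitz_group_conj_by_clrep_iso[OF assms(3,4) b assms(5)] by blast
    show "snd b ** (snd a ** x ** snd b) ** snd a = x" for x
      using ba by (rule matrix_conj_cancel)
    show "snd a ** (snd b ** y ** snd a) ** snd b = y" for y
      using ab by (rule matrix_conj_cancel)
  qed
  moreover have "snd a ** (x ** y) ** snd b = (snd a ** x ** snd b) ** (snd a ** y ** snd b)" for x y
  proof -
    have "(snd a ** x ** snd b) ** (snd a ** y ** snd b) = snd a ** x ** (snd b ** snd a) ** y ** snd b"
      by (simp add: matrix_mul_assoc)
    then show ?thesis using ba by (simp add: matrix_mul_assoc)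
  qed
  ultimately show ?thesis by blast
qed

theorem proposition3p12:
  fixes h :: "'v::euclidean_space \<Rightarrow> 'v \<Rightarrow> real"
    and g :: "'v \<Rightarrow> complex^'n::finite^'n"
    and h' :: "'w::euclidean_space \<Rightarrow> 'w \<Rightarrow> real"
    and g' :: "'w \<Rightarrow> complex^'m::finite^'m"
  assumes "quad_space h" and "weakly_faithful h g"
  shows "bij_betw snd (clrep_Aut h g) (lipschitz_group g)
     \<and> (\<forall>a\<in>clrep_Aut h g. \<forall>b\<in>clrep_Aut h g.
           clrep_comp a b \<in> clrep_Aut h g \<and> snd (clrep_comp a b) = snd a ** snd b)
     \<and> ((quad_space h' \<and> weakly_faithful h' g' \<and> (\<exists>a. clrep_iso h g h' g' a)) \<longrightarrow>
        (\<exists>F. bij_betw F (lipschitz_group g) (lipschitz_group g')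
             \<and> (\<forall>x\<in>lipschitz_group g. \<forall>y\<in>lipschitz_group g. F (x ** y) = F x ** F y)))"
  using bij_betw_snd_clrep_Aut[OF assms] clrep_Aut_comp lipschitz_group_isomorphic[OF assms]
  by (auto simp: clrep_comp_def)

end
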